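(* Let $C\subseteq\mathbb R^d$ be a compact convex set, let $A\subseteq\mathbb R^d$ be measurable, and let $A'$ be a homothet of $-C$ (a set of the form $x+\lambda(-C)$ with $\lambda>0$) with $\mathrm{vol}(A)=\mathrm{vol}(A')$. Then $$\mathrm{vol}\Big(\bigcap_{a\in A}(a+C)\Big)\le\mathrm{vol}\Big(\bigcap_{a\in A'}(a+C)\Big).$$
   Context: $\mathrm{vol}$ denotes $d$-dimensional Lebesgue measure. *)

theory Defs
  imports "HOL-Analysis.Analysis"
begin

end

theory Submission
  imports Defs
begin

(* Let B = (INT a:A. a + C).  Every b in B and a in A satisfy b - a in C, so B + (-A) lies in C
   and the Brunn--Minkowski inequality gives vol(B)^(1/n) + vol(A)^(1/n) <= vol(C)^(1/n).  As
   vol(A) = vol(A') = t^n vol(C), this yields vol(B) <= (1 - t)^n vol(C) for t < 1 and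
   vol(B) = 0 for t >= 1.  For t < 1, convexity shows that the intersection B' over the
   reflected homothet A' = x - t C contains the homothet x + (1 - t) C, of volume (1 - t)^n vol(C).

   Most of the file proves the Brunn--Minkowski inequality, following Hadwiger and Ohmann:
     1. for two boxes it is the superadditivity of the geometric mean;
     2. for finite unions of boxes with disjoint interiors, by induction on the number of boxes:
        cut one family along a hyperplane separating two of its boxes, cut the other family in
        the same proportion, and glue the inequalities for the two pairs of pieces;
     3. for nonempty compact sets, by covering them with fine grid cubes and letting the mesh
        tend to zero;
     4. for B + (-A) with A merely measurable, by inner approximation of A by compact sets. *)

lemma inner_sum_Basis_coordinate:
  fixes f :: "'a::euclidean_space \<Rightarrow> real"
  assumes "i \<in> Basis"
  shows "(\<Sum>j\<in>Basis. f j *\<^sub>R j) \<bullet> i = f i"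
  using assms by (simp add: inner_sum_left inner_Basis if_distrib cong: if_cong)

lemma le_powr_inverse_iff:
  fixes X y d :: real
  assumes "0 \<le> X" "0 \<le> y" "d > 0"
  shows "X \<le> y powr (1 / d) \<longleftrightarrow> X powr d \<le> y"
proof
  assume "X \<le> y powr (1 / d)"
  then have "X powr d \<le> (y powr (1 / d)) powr d" using assms by (intro powr_mono2) auto
  then show "X powr d \<le> y" using assms by (simp add: powr_powr)
next
  assume "X powr d \<le> y"
  then have "(X powr d) powr (1 / d) \<le> y powr (1 / d)" using assms by (intro powr_mono2) auto
  then show "X \<le> y powr (1 / d)" using assms by (simp add: powr_powr)
qed

text \<open>Superadditivity of the geometric mean: after dividing by the right-hand side, both
  terms are geometric means of numbers whose arithmetic means add up to \<open>1\<close>.\<close>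

lemma prod_root_superadditive:
  fixes s r :: "'b \<Rightarrow> real"
  assumes "finite I" "I \<noteq> {}" "\<And>i. i \<in> I \<Longrightarrow> s i > 0" "\<And>i. i \<in> I \<Longrightarrow> r i > 0"
  shows "(\<Prod>i\<in>I. s i) powr (1 / card I) + (\<Prod>i\<in>I. r i) powr (1 / card I)
         \<le> (\<Prod>i\<in>I. s i + r i) powr (1 / card I)"
proof -
  let ?e = "1 / card I" and ?w = "\<lambda>i. s i + r i"
  have card: "card I > 0" using assms by auto
  have w: "?w i > 0" if "i \<in> I" for i using assms that by (simp add: add_pos_pos)
  have "(\<Prod>i\<in>I. ?w i) > 0" using w by (simp add: prod_pos)
  then have prodw: "(\<Prod>i\<in>I. ?w i) powr ?e > 0" by simp
  have "(\<Prod>i\<in>I. s i / ?w i) powr ?e + (\<Prod>i\<in>I. r i / ?w i) powr ?e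
        \<le> (\<Sum>i\<in>I. s i / ?w i / card I) + (\<Sum>i\<in>I. r i / ?w i / card I)"
    using assms w by (intro add_mono arith_geom_mean) (auto intro: less_imp_le)
  also have "\<dots> = (\<Sum>i\<in>I. 1 / card I)"
    unfolding sum.distrib[symmetric]
  proof (intro sum.cong refl)
    fix i assume "i \<in> I"
    then have "?w i \<noteq> 0" using w by (metis less_irrefl)
    then show "s i / ?w i / card I + r i / ?w i / card I = 1 / card I"
      by (simp add: add_divide_distrib[symmetric])
  qed
  also have "\<dots> = 1" using assms by simp
  finally have "((\<Prod>i\<in>I. s i) powr ?e + (\<Prod>i\<in>I. r i) powr ?e) / (\<Prod>i\<in>I. ?w i) powr ?e \<le> 1"
    using assms w by (simp add: prod_dividef powr_divide prod_nonneg less_imp_le add_divide_distrib)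
  then show ?thesis using prodw by (simp add: divide_le_eq)
qed

text \<open>Minkowski sums \<open>S + T = {s + t. s \<in> S, t \<in> T}\<close> are written with the pointwise
  addition of sets; the sum of two compact sets is compact.\<close>

lemma compact_set_plus:
  fixes S T :: "'a::real_normed_vector set"
  assumes "compact S" "compact T"
  shows "compact (S + T)"
proof -
  have "S + T = {x + y | x y. x \<in> S \<and> y \<in> T}" by (auto simp: set_plus_def)
  then show ?thesis using compact_sums[OF assms] by simp
qed

lemma measure_reflection: "measure lebesgue (uminus ` S) = measure lebesgue (S :: 'a::euclidean_space set)"
proof -
  have "uminus ` S = (\<lambda>x. (-1) *\<^sub>R x + 0) ` S" by simp
  then show ?thesis using measure_lebesgue_affine[of "-1" 0 S] by simp
qed

subsection \<open>The Brunn--Minkowski inequality for boxes\<close>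

definition brunn_minkowski :: "'a::euclidean_space set \<Rightarrow> 'a set \<Rightarrow> bool" where
  "brunn_minkowski S T \<longleftrightarrow>
     measure lebesgue S powr (1 / DIM('a)) + measure lebesgue T powr (1 / DIM('a))
       \<le> measure lebesgue (S + T) powr (1 / DIM('a))"

lemma brunn_minkowski_commute: "brunn_minkowski S T \<Longrightarrow> brunn_minkowski T S"
  unfolding brunn_minkowski_def by (simp add: add.commute)

definition proper_box :: "'a::euclidean_space set \<Rightarrow> bool" where
  "proper_box K \<longleftrightarrow> (\<exists>u v. K = cbox u v \<and> (\<forall>i\<in>Basis. u \<bullet> i < v \<bullet> i))"

lemma proper_box_compact: "proper_box K \<Longrightarrow> compact K"
  unfolding proper_box_def by auto

lemma proper_box_measure_pos: "proper_box K \<Longrightarrow> measure lebesgue K > 0"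
  unfolding proper_box_def by (auto simp: content_pos_lt_eq)

lemma cbox_add_subset_set_plus:
  fixes u v p q :: "'a::euclidean_space"
  assumes uv: "\<And>i. i \<in> Basis \<Longrightarrow> u \<bullet> i < v \<bullet> i" and pq: "\<And>i. i \<in> Basis \<Longrightarrow> p \<bullet> i < q \<bullet> i"
  shows "cbox (u + p) (v + q) \<subseteq> cbox u v + cbox p q"
proof
  fix z assume z: "z \<in> cbox (u + p) (v + q)"
  \<comment> \<open>In each coordinate, cut z at the same relative position of both intervals.\<close>
  define \<theta> where "\<theta> i = (z \<bullet> i - u \<bullet> i - p \<bullet> i) / ((v \<bullet> i - u \<bullet> i) + (q \<bullet> i - p \<bullet> i))" for i :: 'a
  define x where "x = (\<Sum>i\<in>Basis. (u \<bullet> i + (v \<bullet> i - u \<bullet> i) * \<theta> i) *\<^sub>R i)"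
  have \<theta>: "0 \<le> \<theta> i" "\<theta> i \<le> 1" if "i \<in> Basis" for i
    using z that uv[OF that] pq[OF that] by (auto simp: \<theta>_def mem_box inner_add_left divide_simps)
  have x: "x \<bullet> i = u \<bullet> i + (v \<bullet> i - u \<bullet> i) * \<theta> i" if "i \<in> Basis" for i
    unfolding x_def using that by (rule inner_sum_Basis_coordinate)
  have zx: "(z - x) \<bullet> i = p \<bullet> i + (q \<bullet> i - p \<bullet> i) * \<theta> i" if "i \<in> Basis" for i
  proof -
    have "(v \<bullet> i - u \<bullet> i) + (q \<bullet> i - p \<bullet> i) > 0" using uv[OF that] pq[OF that] by simp
    then show ?thesis using x[OF that] by (simp add: \<theta>_def inner_diff_left field_simps)
  qed
  have between: "0 \<le> (b - a) * s" "(b - a) * s \<le> b - a" if "a < b" "0 \<le> s" "s \<le> 1"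
    for a b s :: real
    using that mult_left_le[of s "b - a"] by auto
  have "x \<in> cbox u v" unfolding mem_box
  proof
    fix i :: 'a assume i: "i \<in> Basis"
    show "u \<bullet> i \<le> x \<bullet> i \<and> x \<bullet> i \<le> v \<bullet> i"
      using between[OF uv[OF i] \<theta>[OF i]] by (simp add: x[OF i])
  qed
  moreover have "z - x \<in> cbox p q" unfolding mem_box
  proof
    fix i :: 'a assume i: "i \<in> Basis"
    show "p \<bullet> i \<le> (z - x) \<bullet> i \<and> (z - x) \<bullet> i \<le> q \<bullet> i"
      using between[OF pq[OF i] \<theta>[OF i]] by (simp add: zx[OF i])
  qed
  ultimately
  show "z \<in> cbox u v + cbox p q"
    using set_plus_intro[of x "cbox u v" "z - x" "cbox p q"] by simp
qed

text \<open>The Brunn--Minkowski inequality for two proper boxes: the sum of two boxes is again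
  a box whose side lengths are the sums of the side lengths, so the inequality is the
  superadditivity of the geometric mean.\<close>

lemma brunn_minkowski_proper_box:
  fixes K L :: "'a::euclidean_space set"
  assumes "proper_box K" "proper_box L"
  shows "brunn_minkowski K L"
proof -
  obtain u v where K: "K = cbox u v" and uv: "\<And>i. i \<in> Basis \<Longrightarrow> u \<bullet> i < v \<bullet> i"
    using assms(1) unfolding proper_box_def by blast
  obtain p q where L: "L = cbox p q" and pq: "\<And>i. i \<in> Basis \<Longrightarrow> p \<bullet> i < q \<bullet> i"
    using assms(2) unfolding proper_box_def by blast
  let ?e = "1 / DIM('a)"
  have "\<forall>i\<in>Basis. (u + p) \<bullet> i \<le> (v + q) \<bullet> i"
    using uv pq by (simp add: inner_add_left add_mono less_imp_le)
  then have sum_box: "measure lebesgue (cbox (u + p) (v + q))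
      = (\<Prod>i\<in>Basis. (v \<bullet> i - u \<bullet> i) + (q \<bullet> i - p \<bullet> i))"
    by (simp add: measure_lborel_cbox_eq inner_diff_left inner_add_left algebra_simps)
  have "measure lebesgue K powr ?e + measure lebesgue L powr ?e
      \<le> measure lebesgue (cbox (u + p) (v + q)) powr ?e"
    using prod_root_superadditive[of Basis "\<lambda>i. v \<bullet> i - u \<bullet> i" "\<lambda>i. q \<bullet> i - p \<bullet> i"] uv pq
    by (simp add: K L sum_box measure_lborel_cbox_eq less_imp_le inner_diff_left)
  also have "\<dots> \<le> measure lebesgue (K + L) powr ?e"
    using cbox_add_subset_set_plus[OF uv pq] compact_set_plus[of K L]
    by (intro powr_mono2 measure_mono_fmeasurable) (auto simp: K L intro: lmeasurable_compact)
  finally show ?thesis unfolding brunn_minkowski_def .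
qed

lemma proper_boxes_separated:
  fixes K L :: "'a::euclidean_space set"
  assumes "proper_box K" "proper_box L" "interior K \<inter> interior L = {}"
  shows "\<exists>i\<in>Basis. \<exists>c. (K \<subseteq> {x. x \<bullet> i \<le> c} \<and> L \<subseteq> {x. c \<le> x \<bullet> i})
                       \<or> (L \<subseteq> {x. x \<bullet> i \<le> c} \<and> K \<subseteq> {x. c \<le> x \<bullet> i})"
proof -
  obtain u v where K: "K = cbox u v" and uv: "\<And>i. i \<in> Basis \<Longrightarrow> u \<bullet> i < v \<bullet> i"
    using assms(1) unfolding proper_box_def by blast
  obtain p q where L: "L = cbox p q" and pq: "\<And>i. i \<in> Basis \<Longrightarrow> p \<bullet> i < q \<bullet> i"
    using assms(2) unfolding proper_box_def by blast
  have "\<exists>i\<in>Basis. v \<bullet> i \<le> p \<bullet> i \<or> q \<bullet> i \<le> u \<bullet> i"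
  proof (rule ccontr)
    assume "\<not> ?thesis"
    then have overlap: "\<And>i. i \<in> Basis \<Longrightarrow> p \<bullet> i < v \<bullet> i \<and> u \<bullet> i < q \<bullet> i" by force
    \<comment> \<open>Otherwise the centre of the intersection box is an interior point of both.\<close>
    define z where "z = (\<Sum>i\<in>Basis. ((max (u \<bullet> i) (p \<bullet> i) + min (v \<bullet> i) (q \<bullet> i)) / 2) *\<^sub>R i)"
    have mid: "a < m \<and> m < b \<and> c < m \<and> m < d"
      if "c < b" "a < d" "a < b" "c < d" "m = (max a c + min b d) / 2" for a b c d m :: real
      using that by (auto simp: max_def min_def split: if_splits)
    have "u \<bullet> i < z \<bullet> i \<and> z \<bullet> i < v \<bullet> i \<and> p \<bullet> i < z \<bullet> i \<and> z \<bullet> i < q \<bullet> i"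
      if i: "i \<in> Basis" for i
      using overlap[OF i] uv[OF i] pq[OF i] i
      by (intro mid) (simp_all add: z_def inner_sum_Basis_coordinate)
    then have "z \<in> box u v \<inter> box p q" by (simp add: mem_box)
    then show False using assms(3) by (auto simp: K L interior_cbox)
  qed
  then obtain i where i: "i \<in> Basis" and sep: "v \<bullet> i \<le> p \<bullet> i \<or> q \<bullet> i \<le> u \<bullet> i" by blast
  show ?thesis
  proof (cases "v \<bullet> i \<le> p \<bullet> i")
    case True
    then have "K \<subseteq> {x. x \<bullet> i \<le> v \<bullet> i} \<and> L \<subseteq> {x. v \<bullet> i \<le> x \<bullet> i}"
      using i by (fastforce simp: K L mem_box)
    then show ?thesis using i by blast
  next
    case False
    then have "L \<subseteq> {x. x \<bullet> i \<le> q \<bullet> i} \<and> K \<subseteq> {x. q \<bullet> i \<le> x \<bullet> i}"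
      using i sep by (fastforce simp: K L mem_box)
    then show ?thesis using i by blast
  qed
qed

subsection \<open>Box families and their slices\<close>

lemma proper_box_subset_measure_pos:
  assumes "proper_box K" "K \<subseteq> T" "T \<in> lmeasurable"
  shows "measure lebesgue T > 0"
proof -
  have "measure lebesgue K \<le> measure lebesgue T"
    by (intro measure_mono_fmeasurable[OF assms(2) _ assms(3)] fmeasurableD lmeasurable_compact
        proper_box_compact[OF assms(1)])
  then show ?thesis using proper_box_measure_pos[OF assms(1)] by linarith
qed

definition box_family :: "'a::euclidean_space set set \<Rightarrow> bool" where
  "box_family F \<longleftrightarrow> finite F \<and> F \<noteq> {} \<and> (\<forall>K\<in>F. proper_box K) \<and>
     (\<forall>K\<in>F. \<forall>L\<in>F. K \<noteq> L \<longrightarrow> interior K \<inter> interior L = {})"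

lemma box_family_compact: "box_family F \<Longrightarrow> compact (\<Union>F)"
  unfolding box_family_def by (intro compact_Union) (auto intro: proper_box_compact)

lemma box_family_measure_pos:
  assumes "box_family F"
  shows "measure lebesgue (\<Union>F) > 0"
proof -
  obtain K where "K \<in> F" "proper_box K" using assms unfolding box_family_def by (metis ex_in_conv)
  then show ?thesis
    using proper_box_subset_measure_pos lmeasurable_compact[OF box_family_compact[OF assms]] by blast
qed

text \<open>A coordinate hyperplane cuts a measurable set into two parts whose measures add up,
  since the hyperplane itself is negligible.\<close>

lemma measure_halfspaces_add:
  fixes S :: "'a::euclidean_space set"
  assumes "S \<in> lmeasurable" "i \<in> Basis"
  shows "measure lebesgue (S \<inter> {x. c \<le> x \<bullet> i}) + measure lebesgue (S \<inter> {x. x \<bullet> i \<le> c})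
       = measure lebesgue S"
proof -
  have parts: "S \<inter> {x. c \<le> x \<bullet> i} \<in> lmeasurable" "S \<inter> {x. x \<bullet> i \<le> c} \<in> lmeasurable"
    using assms(1) by (auto intro!: fmeasurable_Int_fmeasurable borel_closed
        closed_halfspace_component_ge closed_halfspace_component_le)
  have "negligible ((S \<inter> {x. c \<le> x \<bullet> i}) \<inter> (S \<inter> {x. x \<bullet> i \<le> c}))"
    by (rule negligible_subset[OF negligible_standard_hyperplane[OF assms(2), of c]]) auto
  moreover have "(S \<inter> {x. c \<le> x \<bullet> i}) \<union> (S \<inter> {x. x \<bullet> i \<le> c}) = S" by auto
  ultimately show ?thesis
    using measure_Un3[OF parts] by (simp add: negligible_imp_measure0)
qed

definition slice :: "'a::euclidean_space set set \<Rightarrow> 'a set \<Rightarrow> 'a set set" where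
  "slice F H = {S \<in> (\<lambda>K. K \<inter> H) ` F. measure lebesgue S > 0}"

abbreviation coordinate_halfspaces :: "'a::euclidean_space \<Rightarrow> real \<Rightarrow> 'a set set" where
  "coordinate_halfspaces i c \<equiv> {{x. c \<le> x \<bullet> i}, {x. x \<bullet> i \<le> c}}"

lemma cbox_Int_coordinate_halfspace:
  assumes "i \<in> Basis" "H \<in> coordinate_halfspaces i c"
  obtains u v where "cbox a b \<inter> H = cbox u v"
proof -
  from assms(2) consider "H = {x. c \<le> x \<bullet> i}" | "H = {x. x \<bullet> i \<le> c}" by blast
  then show thesis using interval_split[OF assms(1), of a b c] that by cases blast+
qed

lemma Union_slice_subset: "\<Union>(slice F H) \<subseteq> \<Union>F \<inter> H"
  by (auto simp: slice_def)

lemma card_slice_le: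
  assumes "finite F"
  shows "card (slice F H) \<le> card F"
proof -
  have "slice F H \<subseteq> (\<lambda>K. K \<inter> H) ` F" unfolding slice_def by blast
  then have "card (slice F H) \<le> card ((\<lambda>K. K \<inter> H) ` F)"
    using assms by (intro card_mono finite_imageI)
  also have "\<dots> \<le> card F" by (rule card_image_le[OF assms])
  finally show ?thesis .
qed

lemma card_slice_less:
  assumes "finite F" "K \<in> F" "measure lebesgue (K \<inter> H) = 0"
  shows "card (slice F H) < card F"
proof -
  have "slice F H \<subseteq> (\<lambda>K. K \<inter> H) ` (F - {K})"
  proof
    fix S assume "S \<in> slice F H"
    then obtain K' where "K' \<in> F" "S = K' \<inter> H" "measure lebesgue S > 0" by (auto simp: slice_def)
    then show "S \<in> (\<lambda>K. K \<inter> H) ` (F - {K})" using assms(3) by (metis DiffI imageI less_irrefl singletonD)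
  qed
  then have "card (slice F H) \<le> card ((\<lambda>K. K \<inter> H) ` (F - {K}))"
    using assms by (intro card_mono finite_imageI finite_Diff)
  also have "\<dots> \<le> card (F - {K})" using assms(1) by (intro card_image_le) simp
  also have "\<dots> < card F" using assms(1,2) by (rule card_Diff1_less)
  finally show ?thesis .
qed

lemma slice_Int_cbox:
  assumes F: "box_family F" and H: "i \<in> Basis" "H \<in> coordinate_halfspaces i c"
    and K: "K \<in> F"
  obtains u v where "K \<inter> H = cbox u v"
proof -
  have "proper_box K" using F K by (simp add: box_family_def)
  then obtain a b where "K = cbox a b" by (auto simp: proper_box_def)
  then show thesis using cbox_Int_coordinate_halfspace[OF H, of a b] that by blast
qed

text \<open>Slicing loses no measure, since the discarded pieces are degenerate boxes.\<close>

lemma measure_slice: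
  assumes F: "box_family F" and H: "i \<in> Basis" "H \<in> coordinate_halfspaces i c"
  shows "measure lebesgue (\<Union>(slice F H)) = measure lebesgue (\<Union>F \<inter> H)"
proof -
  define Z where "Z = (\<lambda>K. K \<inter> H) ` F - slice F H"
  have negZ: "negligible (\<Union>Z)"
  proof (rule negligible_Union)
    show "finite Z" using F by (simp add: Z_def box_family_def)
    fix S assume "S \<in> Z"
    then obtain K where K: "K \<in> F" "S = K \<inter> H" "measure lebesgue S \<le> 0"
      by (auto simp: Z_def slice_def)
    obtain u v where "S = cbox u v" using slice_Int_cbox[OF F H K(1)] K(2) by metis
    moreover have "measure lebesgue S = 0" using K(3) measure_nonneg[of lebesgue S] by linarith
    ultimately show "negligible S" by (simp add: negligible_iff_measure)
  qed
  have "\<Union>F \<inter> H = \<Union>(slice F H) \<union> \<Union>Z" by (auto simp: slice_def Z_def)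
  then have "negligible (\<Union>(slice F H) - \<Union>F \<inter> H \<union> (\<Union>F \<inter> H - \<Union>(slice F H)))"
    by (intro negligible_subset[OF negZ]) blast
  moreover have "\<Union>(slice F H) \<in> lmeasurable"
  proof (intro lmeasurable_compact compact_Union)
    show "finite (slice F H)" using F by (simp add: box_family_def slice_def)
    fix S assume "S \<in> slice F H"
    then obtain K where "K \<in> F" "S = K \<inter> H" by (auto simp: slice_def)
    then show "compact S" using slice_Int_cbox[OF F H] by (metis compact_cbox)
  qed
  ultimately show ?thesis
    by (intro measure_negligible_symdiff[symmetric])
qed

lemma box_family_slice:
  assumes F: "box_family F" and H: "i \<in> Basis" "H \<in> coordinate_halfspaces i c"
    and pos: "measure lebesgue (\<Union>F \<inter> H) > 0"
  shows "box_family (slice F H)"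
  unfolding box_family_def
proof (intro conjI ballI impI)
  show "finite (slice F H)" using F by (simp add: box_family_def slice_def)
  show "slice F H \<noteq> {}" using pos measure_slice[OF F H] by auto
  fix S assume S: "S \<in> slice F H"
  then obtain K where K: "K \<in> F" "S = K \<inter> H" "measure lebesgue S > 0" by (auto simp: slice_def)
  obtain u v where "S = cbox u v" using slice_Int_cbox[OF F H K(1)] K(2) by metis
  then show "proper_box S" using K(3) by (auto simp: proper_box_def content_pos_lt_eq)
  fix T assume T: "T \<in> slice F H" "S \<noteq> T"
  then obtain L where L: "L \<in> F" "T = L \<inter> H" by (auto simp: slice_def)
  have "interior K \<inter> interior L = {}" using F K L T(2) by (auto simp: box_family_def)
  then show "interior S \<inter> interior T = {}" using K(2) L(2) by auto
qed

subsection \<open>Cutting off a prescribed portion of a compact set\<close>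

lemma measure_cbox_slab_le:
  fixes l u :: "'a::euclidean_space"
  assumes i: "i \<in> Basis" and st: "s \<le> t" and lu: "\<And>j. j \<in> Basis \<Longrightarrow> l \<bullet> j \<le> u \<bullet> j"
  shows "measure lebesgue (cbox l u \<inter> {x. s \<le> x \<bullet> i \<and> x \<bullet> i \<le> t})
         \<le> (t - s) * (\<Prod>j\<in>Basis - {i}. u \<bullet> j - l \<bullet> j)"
proof -
  define l' where "l' = (\<Sum>j\<in>Basis. (if j = i then max (l \<bullet> i) s else l \<bullet> j) *\<^sub>R j)"
  define u' where "u' = (\<Sum>j\<in>Basis. (if j = i then min (u \<bullet> i) t else u \<bullet> j) *\<^sub>R j)"
  have l': "l' \<bullet> j = (if j = i then max (l \<bullet> i) s else l \<bullet> j)" if "j \<in> Basis" for j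
    unfolding l'_def using that by (rule inner_sum_Basis_coordinate)
  have u': "u' \<bullet> j = (if j = i then min (u \<bullet> i) t else u \<bullet> j)" if "j \<in> Basis" for j
    unfolding u'_def using that by (rule inner_sum_Basis_coordinate)
  have slab: "cbox l u \<inter> {x. s \<le> x \<bullet> i \<and> x \<bullet> i \<le> t} = cbox l' u'"
    using i by (auto simp: mem_box l' u' split: if_splits)
  have rest: "0 \<le> (\<Prod>j\<in>Basis - {i}. u \<bullet> j - l \<bullet> j)"
    using lu by (intro prod_nonneg) auto
  show ?thesis
  proof (cases "\<forall>j\<in>Basis. l' \<bullet> j \<le> u' \<bullet> j")
    case True
    have "measure lebesgue (cbox l' u') = (u' \<bullet> i - l' \<bullet> i) * (\<Prod>j\<in>Basis - {i}. u' \<bullet> j - l' \<bullet> j)"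
      using True i by (simp add: measure_lborel_cbox_eq inner_diff_left prod.remove)
    also have "\<dots> = (u' \<bullet> i - l' \<bullet> i) * (\<Prod>j\<in>Basis - {i}. u \<bullet> j - l \<bullet> j)"
      by (intro arg_cong2[where f="(*)"] prod.cong) (auto simp: l' u')
    also have "\<dots> \<le> (t - s) * (\<Prod>j\<in>Basis - {i}. u \<bullet> j - l \<bullet> j)"
      using rest i by (intro mult_right_mono) (auto simp: l' u')
    finally show ?thesis using slab by simp
  next
    case False
    then show ?thesis using slab rest st by (auto simp: measure_lborel_cbox_eq)
  qed
qed

lemma lipschitz_measure_upper_halfspace:
  fixes S :: "'a::euclidean_space set"
  assumes S: "compact S" "S \<subseteq> cbox l u" and i: "i \<in> Basis"
    and lu: "\<And>j. j \<in> Basis \<Longrightarrow> l \<bullet> j \<le> u \<bullet> j"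
  shows "(\<Prod>j\<in>Basis - {i}. u \<bullet> j - l \<bullet> j)-lipschitz_on UNIV (\<lambda>c. measure lebesgue (S \<inter> {x. c \<le> x \<bullet> i}))"
proof -
  define L where "L = (\<Prod>j\<in>Basis - {i}. u \<bullet> j - l \<bullet> j)"
  define g where "g c = measure lebesgue (S \<inter> {x. c \<le> x \<bullet> i})" for c
  have meas: "S \<inter> {x. c \<le> x \<bullet> i} \<in> lmeasurable" "S \<inter> {x. s \<le> x \<bullet> i \<and> x \<bullet> i \<le> t} \<in> lmeasurable"
    "cbox l u \<inter> {x. s \<le> x \<bullet> i \<and> x \<bullet> i \<le> t} \<in> lmeasurable" for c s t
    using lmeasurable_compact[OF S(1)]
    by (auto intro!: fmeasurable_Int_fmeasurable borel_closed closed_Collect_conj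
        closed_halfspace_component_ge closed_halfspace_component_le)
  have step: "\<bar>g s - g t\<bar> \<le> L * (t - s)" if st: "s \<le> t" for s t
  proof -
    have "S \<inter> {x. s \<le> x \<bullet> i} \<subseteq> (S \<inter> {x. t \<le> x \<bullet> i}) \<union> (S \<inter> {x. s \<le> x \<bullet> i \<and> x \<bullet> i \<le> t})"
      by auto
    then have "g s \<le> measure lebesgue ((S \<inter> {x. t \<le> x \<bullet> i}) \<union> (S \<inter> {x. s \<le> x \<bullet> i \<and> x \<bullet> i \<le> t}))"
      unfolding g_def using meas by (intro measure_mono_fmeasurable) auto
    also have "\<dots> \<le> g t + measure lebesgue (S \<inter> {x. s \<le> x \<bullet> i \<and> x \<bullet> i \<le> t})"
      unfolding g_def using meas by (intro measure_Un_le) auto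
    also have "measure lebesgue (S \<inter> {x. s \<le> x \<bullet> i \<and> x \<bullet> i \<le> t})
       \<le> measure lebesgue (cbox l u \<inter> {x. s \<le> x \<bullet> i \<and> x \<bullet> i \<le> t})"
      using meas S(2) by (intro measure_mono_fmeasurable) auto
    also have "\<dots> \<le> (t - s) * L" unfolding L_def by (rule measure_cbox_slab_le[OF i st lu])
    finally have "g s - g t \<le> L * (t - s)" by (simp add: mult.commute)
    moreover have "g t \<le> g s"
      unfolding g_def using meas st by (intro measure_mono_fmeasurable) auto
    ultimately show ?thesis by simp
  qed
  have "dist (g x) (g y) \<le> L * dist x y" for x y
  proof (cases "x \<le> y")
    case True
    then show ?thesis using step[OF True] by (simp add: dist_real_def)
  next
    case False
    then show ?thesis using step[of y x] by (simp add: dist_real_def abs_minus_commute)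
  qed
  moreover have "L \<ge> 0" unfolding L_def using lu by (intro prod_nonneg) auto
  ultimately have "L-lipschitz_on UNIV g" by (intro lipschitz_onI)
  then show ?thesis unfolding L_def g_def .
qed

lemma measure_upper_halfspace_ivt:
  fixes S :: "'a::euclidean_space set"
  assumes S: "compact S" and i: "i \<in> Basis" and y: "0 \<le> y" "y \<le> measure lebesgue S"
  obtains c where "measure lebesgue (S \<inter> {x. c \<le> x \<bullet> i}) = y"
proof (cases "S = {}")
  case True
  then show thesis using y that by simp
next
  case False
  define g where "g c = measure lebesgue (S \<inter> {x. c \<le> x \<bullet> i})" for c
  obtain a where a: "S \<subseteq> cbox (-a) a"
    using bounded_subset_cbox_symmetric[OF compact_imp_bounded[OF S]] by blast
  then have aa: "(-a) \<bullet> j \<le> a \<bullet> j" if "j \<in> Basis" for j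
    using False that by (force simp: mem_box)
  have "continuous_on UNIV g"
    unfolding g_def by (rule lipschitz_on_continuous_on[OF lipschitz_measure_upper_halfspace[OF S a i aa]])
  moreover have "S \<inter> {x. (-a) \<bullet> i \<le> x \<bullet> i} = S" "S \<inter> {x. a \<bullet> i + 1 \<le> x \<bullet> i} = {}"
    using a i by (fastforce simp: mem_box)+
  then have "g ((-a) \<bullet> i) = measure lebesgue S" "g (a \<bullet> i + 1) = 0" by (simp_all add: g_def)
  ultimately obtain c where "g c = y"
    using IVT2'[of g "a \<bullet> i + 1" y "(-a) \<bullet> i"] y aa[OF i] continuous_on_subset by fastforce
  then show thesis using that unfolding g_def by blast
qed

subsection \<open>The Brunn--Minkowski inequality for unions of boxes\<close>

text \<open>The numerical heart of the Hadwiger--Ohmann argument: if two sets are both cut in the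
  same ratio \<open>\<theta> : 1 - \<theta>\<close> and the Brunn--Minkowski inequality holds for the corresponding
  pieces, it holds for the whole sets, provided the measures \<open>m\<^sub>1, m\<^sub>2\<close> of the two
  piece-sums add up to at most the measure \<open>m\<close> of the whole sum.\<close>

lemma brunn_minkowski_glue:
  fixes a b m\<^sub>1 m\<^sub>2 m \<theta> d :: real
  assumes d: "d > 0" and \<theta>: "0 < \<theta>" "\<theta> < 1" and ab: "a \<ge> 0" "b \<ge> 0" "m\<^sub>1 \<ge> 0" "m\<^sub>2 \<ge> 0"
    and up: "(\<theta> * a) powr (1 / d) + (\<theta> * b) powr (1 / d) \<le> m\<^sub>1 powr (1 / d)"
    and down: "((1 - \<theta>) * a) powr (1 / d) + ((1 - \<theta>) * b) powr (1 / d) \<le> m\<^sub>2 powr (1 / d)"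
    and sum: "m\<^sub>1 + m\<^sub>2 \<le> m"
  shows "a powr (1 / d) + b powr (1 / d) \<le> m powr (1 / d)"
proof -
  define X where "X = a powr (1 / d) + b powr (1 / d)"
  have X: "X \<ge> 0" by (simp add: X_def)
  have scaled: "(\<mu> powr (1 / d) * X) powr d = \<mu> * X powr d" if "\<mu> > 0" for \<mu> :: real
    using that X d by (simp add: powr_mult powr_powr)
  have "\<theta> powr (1 / d) * X \<le> m\<^sub>1 powr (1 / d)"
    using up \<theta> ab by (simp add: X_def powr_mult distrib_left)
  then have "\<theta> * X powr d \<le> m\<^sub>1"
    using le_powr_inverse_iff[of "\<theta> powr (1 / d) * X" m\<^sub>1 d] scaled[OF \<theta>(1)] X ab d by simp
  moreover have "(1 - \<theta>) powr (1 / d) * X \<le> m\<^sub>2 powr (1 / d)"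
    using down \<theta> ab by (simp add: X_def powr_mult distrib_left)
  then have "(1 - \<theta>) * X powr d \<le> m\<^sub>2"
    using le_powr_inverse_iff[of "(1 - \<theta>) powr (1 / d) * X" m\<^sub>2 d] scaled[of "1 - \<theta>"] \<theta> X ab d
    by simp
  ultimately have "X powr d \<le> m" using sum by (simp add: algebra_simps)
  then show ?thesis
    using le_powr_inverse_iff[of X m d] X d sum ab unfolding X_def by simp
qed

lemma measure_add_le_opposite_halfspaces:
  fixes S P Q :: "'a::euclidean_space set"
  assumes S: "S \<in> lmeasurable" and i: "i \<in> Basis" and PQ: "P \<in> sets lebesgue" "Q \<in> sets lebesgue"
    and P: "P \<subseteq> S \<inter> {x. c \<le> x \<bullet> i}" and Q: "Q \<subseteq> S \<inter> {x. x \<bullet> i \<le> c}"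
  shows "measure lebesgue P + measure lebesgue Q \<le> measure lebesgue S"
proof -
  have "S \<inter> {x. c \<le> x \<bullet> i} \<in> lmeasurable" "S \<inter> {x. x \<bullet> i \<le> c} \<in> lmeasurable"
    using S by (auto intro!: fmeasurable_Int_fmeasurable borel_closed
        closed_halfspace_component_ge closed_halfspace_component_le)
  then have "measure lebesgue P \<le> measure lebesgue (S \<inter> {x. c \<le> x \<bullet> i})"
    "measure lebesgue Q \<le> measure lebesgue (S \<inter> {x. x \<bullet> i \<le> c})"
    using PQ P Q by (auto intro: measure_mono_fmeasurable)
  then show ?thesis using measure_halfspaces_add[OF S i, of c] by linarith
qed

text \<open>A family of at least two boxes can be cut by a coordinate hyperplane such that both
  slices are again box families with strictly fewer boxes: cut along a hyperplane separating
  two of its boxes.\<close>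

lemma box_family_split:
  assumes F: "box_family F" and two: "card F \<ge> 2"
  obtains i c where "i \<in> Basis"
    "box_family (slice F {x. c \<le> x \<bullet> i})" "card (slice F {x. c \<le> x \<bullet> i}) < card F"
    "box_family (slice F {x. x \<bullet> i \<le> c})" "card (slice F {x. x \<bullet> i \<le> c}) < card F"
proof -
  have fin: "finite F" using F by (simp add: box_family_def)
  obtain K L where KL: "K \<in> F" "L \<in> F" "K \<noteq> L"
    using two card_le_Suc0_iff_eq[OF fin] by fastforce
  have "proper_box K" "proper_box L" "interior K \<inter> interior L = {}"
    using F KL by (auto simp: box_family_def)
  then obtain i c K\<^sub>1 K\<^sub>2 where i: "i \<in> Basis" and K: "K\<^sub>1 \<in> F" "K\<^sub>2 \<in> F" "proper_box K\<^sub>1" "proper_box K\<^sub>2"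
      "K\<^sub>1 \<subseteq> {x. x \<bullet> i \<le> c}" "K\<^sub>2 \<subseteq> {x. c \<le> x \<bullet> i}"
    using proper_boxes_separated KL by metis
  have U: "\<Union>F \<in> lmeasurable" using box_family_compact[OF F] by (rule lmeasurable_compact)
  have null: "measure lebesgue S = 0" if "S \<subseteq> {x. x \<bullet> i = c}" for S
    by (rule negligible_imp_measure0[OF negligible_subset[OF negligible_standard_hyperplane[OF i] that]])
  have "K\<^sub>1 \<inter> {x. c \<le> x \<bullet> i} \<subseteq> {x. x \<bullet> i = c}" "K\<^sub>2 \<inter> {x. x \<bullet> i \<le> c} \<subseteq> {x. x \<bullet> i = c}"
    using K(5,6) by auto
  then have card: "card (slice F {x. c \<le> x \<bullet> i}) < card F" "card (slice F {x. x \<bullet> i \<le> c}) < card F"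
    using card_slice_less[OF fin K(1)] card_slice_less[OF fin K(2)] null by blast+
  have H: "{x. c \<le> x \<bullet> i} \<in> coordinate_halfspaces i c" "{x. x \<bullet> i \<le> c} \<in> coordinate_halfspaces i c"
    by auto
  have "\<Union>F \<inter> {x. c \<le> x \<bullet> i} \<in> lmeasurable" "\<Union>F \<inter> {x. x \<bullet> i \<le> c} \<in> lmeasurable"
    using U by (auto intro!: fmeasurable_Int_fmeasurable borel_closed
        closed_halfspace_component_ge closed_halfspace_component_le)
  moreover have "K\<^sub>2 \<subseteq> \<Union>F \<inter> {x. c \<le> x \<bullet> i}" "K\<^sub>1 \<subseteq> \<Union>F \<inter> {x. x \<bullet> i \<le> c}"
    using K by auto
  ultimately have "box_family (slice F {x. c \<le> x \<bullet> i})" "box_family (slice F {x. x \<bullet> i \<le> c})"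
    using box_family_slice[OF F i H(1)] box_family_slice[OF F i H(2)]
      proper_box_subset_measure_pos[OF K(4)] proper_box_subset_measure_pos[OF K(3)] by auto
  then show thesis using that[OF i _ card(1) _ card(2)] by blast
qed

text \<open>Geometric gluing step: if \<open>S\<close> and \<open>T\<close> are cut by coordinate hyperplanes into pieces
  of the same proportions and the Brunn--Minkowski inequality holds for the upper and for the
  lower pieces, then it holds for \<open>S\<close> and \<open>T\<close>; the two piece-sums lie in opposite halfspaces.\<close>

lemma brunn_minkowski_glue_halfspaces:
  fixes S T S\<^sub>1 S\<^sub>2 T\<^sub>1 T\<^sub>2 :: "'a::euclidean_space set"
  assumes i: "i \<in> Basis" and \<theta>: "0 < \<theta>" "\<theta> < 1"
    and compact: "compact S" "compact T" "compact S\<^sub>1" "compact S\<^sub>2" "compact T\<^sub>1" "compact T\<^sub>2"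
    and S\<^sub>1: "S\<^sub>1 \<subseteq> S \<inter> {x. c \<le> x \<bullet> i}" "measure lebesgue S\<^sub>1 = \<theta> * measure lebesgue S"
    and S\<^sub>2: "S\<^sub>2 \<subseteq> S \<inter> {x. x \<bullet> i \<le> c}" "measure lebesgue S\<^sub>2 = (1 - \<theta>) * measure lebesgue S"
    and T\<^sub>1: "T\<^sub>1 \<subseteq> T \<inter> {x. c' \<le> x \<bullet> i}" "measure lebesgue T\<^sub>1 = \<theta> * measure lebesgue T"
    and T\<^sub>2: "T\<^sub>2 \<subseteq> T \<inter> {x. x \<bullet> i \<le> c'}" "measure lebesgue T\<^sub>2 = (1 - \<theta>) * measure lebesgue T"
    and bm: "brunn_minkowski S\<^sub>1 T\<^sub>1" "brunn_minkowski S\<^sub>2 T\<^sub>2"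
  shows "brunn_minkowski S T"
proof -
  have "S\<^sub>1 + T\<^sub>1 \<subseteq> (S + T) \<inter> {x. c + c' \<le> x \<bullet> i}"
  proof
    fix z assume "z \<in> S\<^sub>1 + T\<^sub>1"
    then obtain s t where "z = s + t" "s \<in> S\<^sub>1" "t \<in> T\<^sub>1" by (rule set_plus_elim)
    moreover from this have "s \<in> S" "t \<in> T" "c \<le> s \<bullet> i" "c' \<le> t \<bullet> i"
      using S\<^sub>1(1) T\<^sub>1(1) by auto
    ultimately show "z \<in> (S + T) \<inter> {x. c + c' \<le> x \<bullet> i}"
      by (simp add: inner_add_left add_mono set_plus_intro)
  qed
  moreover have "S\<^sub>2 + T\<^sub>2 \<subseteq> (S + T) \<inter> {x. x \<bullet> i \<le> c + c'}"
  proof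
    fix z assume "z \<in> S\<^sub>2 + T\<^sub>2"
    then obtain s t where "z = s + t" "s \<in> S\<^sub>2" "t \<in> T\<^sub>2" by (rule set_plus_elim)
    moreover from this have "s \<in> S" "t \<in> T" "s \<bullet> i \<le> c" "t \<bullet> i \<le> c'"
      using S\<^sub>2(1) T\<^sub>2(1) by auto
    ultimately show "z \<in> (S + T) \<inter> {x. x \<bullet> i \<le> c + c'}"
      by (simp add: inner_add_left add_mono set_plus_intro)
  qed
  moreover have "compact (S + T)" "compact (S\<^sub>1 + T\<^sub>1)" "compact (S\<^sub>2 + T\<^sub>2)"
    using compact by (simp_all add: compact_set_plus)
  ultimately have sum: "measure lebesgue (S\<^sub>1 + T\<^sub>1) + measure lebesgue (S\<^sub>2 + T\<^sub>2) \<le> measure lebesgue (S + T)"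
    by (intro measure_add_le_opposite_halfspaces[OF _ i, where c="c + c'"])
      (simp_all add: lmeasurable_compact fmeasurableD)
  have up: "(\<theta> * measure lebesgue S) powr (1 / DIM('a)) + (\<theta> * measure lebesgue T) powr (1 / DIM('a))
      \<le> measure lebesgue (S\<^sub>1 + T\<^sub>1) powr (1 / DIM('a))"
    using bm(1) S\<^sub>1(2) T\<^sub>1(2) by (simp add: brunn_minkowski_def)
  have down: "((1 - \<theta>) * measure lebesgue S) powr (1 / DIM('a)) + ((1 - \<theta>) * measure lebesgue T) powr (1 / DIM('a))
      \<le> measure lebesgue (S\<^sub>2 + T\<^sub>2) powr (1 / DIM('a))"
    using bm(2) S\<^sub>2(2) T\<^sub>2(2) by (simp add: brunn_minkowski_def)
  show ?thesis
    unfolding brunn_minkowski_def by (rule brunn_minkowski_glue[OF _ \<theta> _ _ _ _ up down sum]) simp_all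
qed

lemma box_family_proportional_cut:
  assumes G: "box_family G" and i: "i \<in> Basis" and \<theta>: "0 < \<theta>" "\<theta> < 1"
  obtains c where
    "box_family (slice G {x. c \<le> x \<bullet> i})" "card (slice G {x. c \<le> x \<bullet> i}) \<le> card G"
    "measure lebesgue (\<Union>(slice G {x. c \<le> x \<bullet> i})) = \<theta> * measure lebesgue (\<Union>G)"
    "box_family (slice G {x. x \<bullet> i \<le> c})" "card (slice G {x. x \<bullet> i \<le> c}) \<le> card G"
    "measure lebesgue (\<Union>(slice G {x. x \<bullet> i \<le> c})) = (1 - \<theta>) * measure lebesgue (\<Union>G)"
proof -
  define b where "b = measure lebesgue (\<Union>G)"
  have b: "b > 0" unfolding b_def by (rule box_family_measure_pos[OF G])
  have fin: "finite G" using G by (simp add: box_family_def)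
  have U: "\<Union>G \<in> lmeasurable" using box_family_compact[OF G] by (rule lmeasurable_compact)
  obtain c where c: "measure lebesgue (\<Union>G \<inter> {x. c \<le> x \<bullet> i}) = \<theta> * b"
    using measure_upper_halfspace_ivt[OF box_family_compact[OF G] i, of "\<theta> * b"] \<theta> b
    by (auto simp: b_def)
  then have c': "measure lebesgue (\<Union>G \<inter> {x. x \<bullet> i \<le> c}) = (1 - \<theta>) * b"
    using measure_halfspaces_add[OF U i, of c] by (simp add: b_def algebra_simps)
  have H: "{x. c \<le> x \<bullet> i} \<in> coordinate_halfspaces i c" "{x. x \<bullet> i \<le> c} \<in> coordinate_halfspaces i c"
    by auto
  show thesis
  proof (rule that)
    show "box_family (slice G {x. c \<le> x \<bullet> i})" "box_family (slice G {x. x \<bullet> i \<le> c})"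
      using box_family_slice[OF G i H(1)] box_family_slice[OF G i H(2)] c c' \<theta> b by simp_all
    show "measure lebesgue (\<Union>(slice G {x. c \<le> x \<bullet> i})) = \<theta> * measure lebesgue (\<Union>G)"
      "measure lebesgue (\<Union>(slice G {x. x \<bullet> i \<le> c})) = (1 - \<theta>) * measure lebesgue (\<Union>G)"
      using measure_slice[OF G i H(1)] measure_slice[OF G i H(2)] c c' by (simp_all add: b_def)
  qed (use card_slice_le[OF fin] in auto)
qed

text \<open>Induction step of the Hadwiger--Ohmann argument: split the family with at least two
  boxes along a separating hyperplane, cut the other family in the same proportion, and
  glue the inequalities for the two (smaller) pairs of pieces.\<close>

lemma brunn_minkowski_box_family_step:
  fixes F G :: "'a::euclidean_space set set"
  assumes IH: "\<And>F' G' :: 'a set set. card F' + card G' < card F + card G \<Longrightarrow>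
                 box_family F' \<Longrightarrow> box_family G' \<Longrightarrow> brunn_minkowski (\<Union>F') (\<Union>G')"
    and F: "box_family F" and G: "box_family G" and two: "card F \<ge> 2"
  shows "brunn_minkowski (\<Union>F) (\<Union>G)"
proof -
  obtain i c where i: "i \<in> Basis"
      and F\<^sub>1: "box_family (slice F {x. c \<le> x \<bullet> i})" "card (slice F {x. c \<le> x \<bullet> i}) < card F"
      and F\<^sub>2: "box_family (slice F {x. x \<bullet> i \<le> c})" "card (slice F {x. x \<bullet> i \<le> c}) < card F"
    using box_family_split[OF F two] by blast
  define a where "a = measure lebesgue (\<Union>F)"
  define \<theta> where "\<theta> = measure lebesgue (\<Union>(slice F {x. c \<le> x \<bullet> i})) / a"
  have U: "\<Union>F \<in> lmeasurable" using box_family_compact[OF F] by (rule lmeasurable_compact)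
  have H: "{x. c \<le> x \<bullet> i} \<in> coordinate_halfspaces i c" "{x. x \<bullet> i \<le> c} \<in> coordinate_halfspaces i c"
    by auto
  have parts: "measure lebesgue (\<Union>(slice F {x. c \<le> x \<bullet> i}))
      + measure lebesgue (\<Union>(slice F {x. x \<bullet> i \<le> c})) = a"
    using measure_halfspaces_add[OF U i, of c] measure_slice[OF F i H(1)] measure_slice[OF F i H(2)]
    by (simp add: a_def)
  have pos: "measure lebesgue (\<Union>(slice F {x. c \<le> x \<bullet> i})) > 0"
    "measure lebesgue (\<Union>(slice F {x. x \<bullet> i \<le> c})) > 0"
    using box_family_measure_pos[OF F\<^sub>1(1)] box_family_measure_pos[OF F\<^sub>2(1)] by auto
  then have \<theta>: "0 < \<theta>" "\<theta> < 1" using parts by (auto simp: \<theta>_def field_simps)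
  have mF: "measure lebesgue (\<Union>(slice F {x. c \<le> x \<bullet> i})) = \<theta> * a"
    "measure lebesgue (\<Union>(slice F {x. x \<bullet> i \<le> c})) = (1 - \<theta>) * a"
    using parts pos by (auto simp: \<theta>_def field_simps)
  obtain c' where G\<^sub>1: "box_family (slice G {x. c' \<le> x \<bullet> i})" "card (slice G {x. c' \<le> x \<bullet> i}) \<le> card G"
      "measure lebesgue (\<Union>(slice G {x. c' \<le> x \<bullet> i})) = \<theta> * measure lebesgue (\<Union>G)"
    and G\<^sub>2: "box_family (slice G {x. x \<bullet> i \<le> c'})" "card (slice G {x. x \<bullet> i \<le> c'}) \<le> card G"
      "measure lebesgue (\<Union>(slice G {x. x \<bullet> i \<le> c'})) = (1 - \<theta>) * measure lebesgue (\<Union>G)"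
    using box_family_proportional_cut[OF G i \<theta>] by blast
  have "brunn_minkowski (\<Union>(slice F {x. c \<le> x \<bullet> i})) (\<Union>(slice G {x. c' \<le> x \<bullet> i}))"
    using IH F\<^sub>1 G\<^sub>1 by simp
  moreover have "brunn_minkowski (\<Union>(slice F {x. x \<bullet> i \<le> c})) (\<Union>(slice G {x. x \<bullet> i \<le> c'}))"
    using IH F\<^sub>2 G\<^sub>2 by simp
  ultimately show ?thesis
    using brunn_minkowski_glue_halfspaces[OF i \<theta> box_family_compact[OF F] box_family_compact[OF G]
        box_family_compact[OF F\<^sub>1(1)] box_family_compact[OF F\<^sub>2(1)]
        box_family_compact[OF G\<^sub>1(1)] box_family_compact[OF G\<^sub>2(1)]
        Union_slice_subset mF(1)[unfolded a_def] Union_slice_subset mF(2)[unfolded a_def]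
        Union_slice_subset G\<^sub>1(3) Union_slice_subset G\<^sub>2(3)]
    by blast
qed

theorem brunn_minkowski_box_family:
  fixes F G :: "'a::euclidean_space set set"
  assumes "box_family F" "box_family G"
  shows "brunn_minkowski (\<Union>F) (\<Union>G)"
  using assms
proof (induction "card F + card G" arbitrary: F G rule: less_induct)
  case less
  have "card F \<noteq> 0" "card G \<noteq> 0" using less.prems by (auto simp: box_family_def)
  then consider "card F \<ge> 2" | "card G \<ge> 2" | "card F = 1" "card G = 1" by linarith
  then show ?case
  proof cases
    case 1
    show ?thesis
      by (rule brunn_minkowski_box_family_step[OF _ less.prems 1]) (rule less.hyps, simp_all)
  next
    case 2
    have "brunn_minkowski (\<Union>G) (\<Union>F)"
      by (rule brunn_minkowski_box_family_step[OF _ less.prems(2,1) 2])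
        (rule less.hyps, simp_all add: add.commute)
    then show ?thesis by (rule brunn_minkowski_commute)
  next
    case 3
    then obtain K L where "F = {K}" "G = {L}" by (auto simp: card_1_singleton_iff)
    then show ?thesis using less.prems brunn_minkowski_proper_box by (auto simp: box_family_def)
  qed
qed

subsection \<open>The Brunn--Minkowski inequality for compact sets\<close>

definition grid_cube :: "real \<Rightarrow> ('a::euclidean_space \<Rightarrow> int) \<Rightarrow> 'a set" where
  "grid_cube h z = cbox (\<Sum>i\<in>Basis. (h * z i) *\<^sub>R i) (\<Sum>i\<in>Basis. (h * (z i + 1)) *\<^sub>R i)"

lemma mem_grid_cube:
  "y \<in> grid_cube h z \<longleftrightarrow> (\<forall>i\<in>Basis. h * z i \<le> y \<bullet> i \<and> y \<bullet> i \<le> h * (z i + 1))"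
  by (simp add: grid_cube_def mem_box inner_sum_Basis_coordinate)

lemma interior_grid_cube:
  "interior (grid_cube h z) = {y. \<forall>i\<in>Basis. h * z i < y \<bullet> i \<and> y \<bullet> i < h * (z i + 1)}"
  by (auto simp: grid_cube_def interior_cbox mem_box inner_sum_Basis_coordinate)

lemma proper_box_grid_cube: "h > 0 \<Longrightarrow> proper_box (grid_cube h z)"
  unfolding proper_box_def grid_cube_def
  by (rule exI, rule exI, rule conjI[OF refl]) (simp add: inner_sum_Basis_coordinate)

text \<open>Distinct grid cubes do not overlap: a common interior point determines the cube.\<close>

lemma grid_cubes_interiors_disjoint:
  assumes h: "h > 0" and "grid_cube h z \<noteq> grid_cube h z'"
  shows "interior (grid_cube h z) \<inter> interior (grid_cube h z') = {}"
proof (rule ccontr)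
  assume "interior (grid_cube h z) \<inter> interior (grid_cube h z') \<noteq> {}"
  then obtain y where y: "y \<in> interior (grid_cube h z)" "y \<in> interior (grid_cube h z')" by blast
  have "z i = z' i" if i: "i \<in> Basis" for i
  proof -
    have "h * z' i < h * (z i + 1)" "h * z i < h * (z' i + 1)"
      using y i unfolding interior_grid_cube by fastforce+
    then have "real_of_int (z' i) < z i + 1" "real_of_int (z i) < z' i + 1"
      using h by (simp_all add: mult_less_cancel_left_pos)
    then show ?thesis by linarith
  qed
  then have "grid_cube h z = grid_cube h z'" unfolding grid_cube_def by (metis (no_types, lifting) sum.cong)
  then show False using assms(2) by blast
qed

lemma grid_cube_floor:
  assumes "h > 0"
  shows "x \<in> grid_cube h (\<lambda>i. \<lfloor>x \<bullet> i / h\<rfloor>)"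
proof -
  have "h * \<lfloor>x \<bullet> i / h\<rfloor> \<le> h * (x \<bullet> i / h)" "h * (x \<bullet> i / h) \<le> h * (\<lfloor>x \<bullet> i / h\<rfloor> + 1)" for i
    using assms real_of_int_floor_add_one_gt[of "x \<bullet> i / h"] by (intro mult_left_mono; simp)+
  then show ?thesis using assms by (simp add: mem_grid_cube)
qed

lemma grid_cube_dist_le:
  fixes y y' :: "'a::euclidean_space" and h :: real
  assumes "y \<in> grid_cube h z" "y' \<in> grid_cube h z"
  shows "dist y y' \<le> DIM('a) * h"
proof -
  have "dist y y' \<le> (\<Sum>i\<in>Basis. \<bar>(y - y') \<bullet> i\<bar>)" unfolding dist_norm by (rule norm_le_l1)
  also have "\<dots> \<le> (\<Sum>i\<in>(Basis::'a set). h)"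
  proof (intro sum_mono)
    fix i :: 'a assume i: "i \<in> Basis"
    have "h * z i \<le> y \<bullet> i" "y \<bullet> i \<le> h * z i + h" "h * z i \<le> y' \<bullet> i" "y' \<bullet> i \<le> h * z i + h"
      using assms i unfolding mem_grid_cube by (auto simp: distrib_left)
    then show "\<bar>(y - y') \<bullet> i\<bar> \<le> h" by (simp add: inner_diff_left abs_le_iff)
  qed
  finally show ?thesis by simp
qed

text \<open>A compact set can be covered by a box family lying within any prescribed distance of it:
  take the grid cubes of a sufficiently fine grid containing points of the set.\<close>

lemma box_family_cover:
  fixes K :: "'a::euclidean_space set"
  assumes K: "compact K" "K \<noteq> {}" and \<delta>: "\<delta> > 0"
  obtains F where "box_family F" "K \<subseteq> \<Union>F" "\<And>y. y \<in> \<Union>F \<Longrightarrow> \<exists>x\<in>K. dist x y \<le> \<delta>"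
proof -
  define h where "h = \<delta> / DIM('a)"
  have h: "h > 0" using \<delta> by (simp add: h_def)
  define index where "index x = restrict (\<lambda>i. \<lfloor>x \<bullet> i / h\<rfloor>) Basis" for x :: 'a
  define F where "F = (\<lambda>x. grid_cube h (index x)) ` K"
  have own_cube: "x \<in> grid_cube h (index x)" for x
    using grid_cube_floor[OF h, of x] by (simp add: index_def grid_cube_def cong: sum.cong)
  obtain R where R: "\<And>x. x \<in> K \<Longrightarrow> norm x \<le> R"
    using compact_imp_bounded[OF K(1)] bounded_iff by blast
  define N where "N = \<lceil>R / h\<rceil>"
  have "index x \<in> PiE Basis (\<lambda>_. {-N..N})" if "x \<in> K" for x
  proof -
    have bound: "\<bar>x \<bullet> i\<bar> \<le> R" if "i \<in> Basis" for i
      using norm_bound_Basis_le[OF that R[OF \<open>x \<in> K\<close>]] by simp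
    have "\<lfloor>x \<bullet> i / h\<rfloor> \<in> {-N..N}" if "i \<in> Basis" for i
    proof -
      have "-(R / h) \<le> x \<bullet> i / h" "x \<bullet> i / h \<le> R / h"
        using h bound[OF that] by (auto simp: abs_le_iff field_simps)
      then have "\<lfloor>-(R / h)\<rfloor> \<le> \<lfloor>x \<bullet> i / h\<rfloor>" "\<lfloor>x \<bullet> i / h\<rfloor> \<le> \<lfloor>R / h\<rfloor>"
        by (simp_all add: floor_mono)
      then show ?thesis using floor_le_ceiling[of "R / h"] by (simp add: N_def ceiling_def)
    qed
    then show ?thesis by (simp add: index_def)
  qed
  then have "F \<subseteq> grid_cube h ` PiE Basis (\<lambda>_. {-N..N})" unfolding F_def by blast
  then have "finite F" by (rule finite_subset) (intro finite_imageI finite_PiE; simp)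
  then have "box_family F"
    using K(2) proper_box_grid_cube[OF h] grid_cubes_interiors_disjoint[OF h]
    unfolding box_family_def F_def by blast
  moreover have "K \<subseteq> \<Union>F" unfolding F_def using own_cube by blast
  moreover have "\<exists>x\<in>K. dist x y \<le> \<delta>" if y: "y \<in> \<Union>F" for y
  proof -
    obtain x where "x \<in> K" "y \<in> grid_cube h (index x)" using y unfolding F_def by blast
    then show ?thesis using grid_cube_dist_le[OF own_cube[of x]] by (force simp: h_def)
  qed
  ultimately show thesis using that by blast
qed

text \<open>The measure of a compact set is the limit of the measures of its closed
  \<open>1/(n+1)\<close>-neighbourhoods (continuity of measure from above).\<close>

lemma measure_cball_thickening_tendsto:
  fixes S :: "'a::euclidean_space set"
  assumes S: "compact S"
  shows "(\<lambda>n. measure lebesgue (S + cball 0 (1 / Suc n))) \<longlonglongrightarrow> measure lebesgue S"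
proof -
  define T where "T n = S + cball 0 (1 / Suc n)" for n
  have T: "T n \<in> lmeasurable" for n
    unfolding T_def by (intro lmeasurable_compact compact_set_plus S compact_cball)
  have dec: "decseq T"
  proof (rule decseq_SucI)
    fix n
    have "cball (0::'a) (1 / Suc (Suc n)) \<subseteq> cball 0 (1 / Suc n)"
      by (intro subset_cball) (simp add: frac_le)
    then show "T (Suc n) \<subseteq> T n" unfolding T_def by (auto simp: set_plus_def)
  qed
  have "(\<lambda>n. measure lebesgue (T n)) \<longlonglongrightarrow> measure lebesgue (\<Inter>n. T n)"
  proof (rule Lim_measure_decseq[OF _ dec])
    show "range T \<subseteq> sets lebesgue" using T by (auto intro: fmeasurableD)
    show "emeasure lebesgue (T n) \<noteq> \<infinity>" for n using fmeasurableD2[OF T[of n]] by simp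
  qed
  moreover have "(\<Inter>n. T n) = S"
  proof
    show "S \<subseteq> (\<Inter>n. T n)" unfolding T_def using set_plus_intro[of _ S 0] by fastforce
    show "(\<Inter>n. T n) \<subseteq> S"
    proof
      fix z assume z: "z \<in> (\<Inter>n. T n)"
      have "\<exists>y\<in>S. dist y z \<le> e" if e: "e > 0" for e
      proof -
        obtain n :: nat where n: "1 / Suc n < e" using nat_approx_posE[OF e] by blast
        from z obtain y v where "z = y + v" "y \<in> S" "v \<in> cball 0 (1 / Suc n)"
          unfolding T_def by (blast elim: set_plus_elim)
        then show ?thesis using n by (intro bexI[of _ y]) (auto simp: dist_norm)
      qed
      then have "z \<in> closure S" by (simp add: closure_approachable_le)
      then show "z \<in> S" using S by (simp add: compact_imp_closed closure_closed)
    qed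
  qed
  ultimately show ?thesis unfolding T_def by simp
qed

text \<open>Approximating both sets from outside by box families yields the Brunn--Minkowski
  inequality up to a small thickening of the Minkowski sum.\<close>

lemma brunn_minkowski_thickened:
  fixes A B :: "'a::euclidean_space set"
  assumes A: "compact A" "A \<noteq> {}" and B: "compact B" "B \<noteq> {}" and r: "r > 0"
  shows "measure lebesgue A powr (1 / DIM('a)) + measure lebesgue B powr (1 / DIM('a))
         \<le> measure lebesgue (A + B + cball 0 r) powr (1 / DIM('a))"
proof -
  obtain F where F: "box_family F" "A \<subseteq> \<Union>F" "\<And>y. y \<in> \<Union>F \<Longrightarrow> \<exists>x\<in>A. dist x y \<le> r / 2"
    using box_family_cover[OF A, of "r / 2"] r by auto
  obtain G where G: "box_family G" "B \<subseteq> \<Union>G" "\<And>y. y \<in> \<Union>G \<Longrightarrow> \<exists>x\<in>B. dist x y \<le> r / 2"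
    using box_family_cover[OF B, of "r / 2"] r by auto
  have "\<Union>F + \<Union>G \<subseteq> A + B + cball 0 r"
  proof
    fix z assume "z \<in> \<Union>F + \<Union>G"
    then obtain y\<^sub>1 y\<^sub>2 where y: "z = y\<^sub>1 + y\<^sub>2" "y\<^sub>1 \<in> \<Union>F" "y\<^sub>2 \<in> \<Union>G" by (rule set_plus_elim)
    obtain x\<^sub>1 x\<^sub>2 where x: "x\<^sub>1 \<in> A" "dist x\<^sub>1 y\<^sub>1 \<le> r / 2" "x\<^sub>2 \<in> B" "dist x\<^sub>2 y\<^sub>2 \<le> r / 2"
      using F(3)[OF y(2)] G(3)[OF y(3)] by blast
    have "norm ((y\<^sub>1 - x\<^sub>1) + (y\<^sub>2 - x\<^sub>2)) \<le> r"
      using norm_triangle_ineq[of "y\<^sub>1 - x\<^sub>1" "y\<^sub>2 - x\<^sub>2"] x by (simp add: dist_norm norm_minus_commute)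
    then have "(y\<^sub>1 - x\<^sub>1) + (y\<^sub>2 - x\<^sub>2) \<in> cball 0 r" by simp
    moreover have "z = (x\<^sub>1 + x\<^sub>2) + ((y\<^sub>1 - x\<^sub>1) + (y\<^sub>2 - x\<^sub>2))" using y(1) by (simp add: algebra_simps)
    ultimately show "z \<in> A + B + cball 0 r" using set_plus_intro[OF set_plus_intro[OF x(1,3)]] by metis
  qed
  moreover have "compact (\<Union>F + \<Union>G)" "compact (A + B + cball 0 r)"
    using A B F G by (simp_all add: compact_set_plus box_family_compact)
  ultimately have sum: "measure lebesgue (\<Union>F + \<Union>G) \<le> measure lebesgue (A + B + cball 0 r)"
    by (intro measure_mono_fmeasurable fmeasurableD lmeasurable_compact)
  have "measure lebesgue A \<le> measure lebesgue (\<Union>F)" "measure lebesgue B \<le> measure lebesgue (\<Union>G)"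
    using A B F G by (auto intro!: measure_mono_fmeasurable fmeasurableD lmeasurable_compact box_family_compact)
  then have "measure lebesgue A powr (1 / DIM('a)) + measure lebesgue B powr (1 / DIM('a))
      \<le> measure lebesgue (\<Union>F) powr (1 / DIM('a)) + measure lebesgue (\<Union>G) powr (1 / DIM('a))"
    by (intro add_mono powr_mono2) auto
  also have "\<dots> \<le> measure lebesgue (\<Union>F + \<Union>G) powr (1 / DIM('a))"
    using brunn_minkowski_box_family[OF F(1) G(1)] unfolding brunn_minkowski_def .
  also have "\<dots> \<le> measure lebesgue (A + B + cball 0 r) powr (1 / DIM('a))"
    using sum by (intro powr_mono2) auto
  finally show ?thesis .
qed

theorem brunn_minkowski_compact:
  fixes A B :: "'a::euclidean_space set"
  assumes "compact A" "A \<noteq> {}" "compact B" "B \<noteq> {}"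
  shows "brunn_minkowski A B"
proof -
  define d where "d = real DIM('a)"
  define X where "X = measure lebesgue A powr (1 / d) + measure lebesgue B powr (1 / d)"
  have d: "d > 0" and X: "X \<ge> 0" by (simp_all add: d_def X_def)
  have "X powr d \<le> measure lebesgue (A + B + cball 0 (1 / Suc n))" for n
    using brunn_minkowski_thickened[OF assms, of "1 / Suc n"] le_powr_inverse_iff[OF X _ d]
    by (simp add: X_def d_def)
  then have "X powr d \<le> measure lebesgue (A + B)"
    using measure_cball_thickening_tendsto[of "A + B"] assms
    by (intro LIMSEQ_le_const[of _ "measure lebesgue (A + B)"]) (auto simp: compact_set_plus)
  then show ?thesis
    using le_powr_inverse_iff[OF X _ d] unfolding brunn_minkowski_def X_def d_def by simp
qed

subsection \<open>The Brunn--Minkowski inequality with a measurable summand\<close>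

lemma lmeasurable_inner_compact:
  fixes A :: "'a::euclidean_space set"
  assumes A: "A \<in> lmeasurable" and e: "e > 0"
  obtains K where "compact K" "K \<subseteq> A" "measure lebesgue A - e \<le> measure lebesgue K"
proof -
  obtain T where T: "closed T" "T \<subseteq> A" "A - T \<in> lmeasurable" "emeasure lebesgue (A - T) < ennreal (e / 2)"
    using sets_lebesgue_inner_closed[OF fmeasurableD[OF A], of "e / 2"] e by auto
  have Tm: "T \<in> lmeasurable" using fmeasurableI2[OF A T(2)] T(1) by (simp add: borel_closed)
  have "measure lebesgue (A - T) < e / 2"
    using T(4) emeasure_eq_measure2[OF T(3)] e by (simp add: ennreal_less_iff)
  moreover have "measure lebesgue (A - T) = measure lebesgue A - measure lebesgue T"
    using A Tm T(2) by (intro measure_Diff) (auto simp: fmeasurable_def)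
  ultimately have mT: "measure lebesgue A - e / 2 < measure lebesgue T" by simp
  define T' where "T' n = T \<inter> cball 0 (real n)" for n :: nat
  have T': "compact (T' n)" for n unfolding T'_def using T(1) by (intro closed_Int_compact) auto
  have "(\<Union>n. T' n) = T" unfolding T'_def by (auto intro: real_arch_simple)
  moreover have "(\<lambda>n. measure lebesgue (T' n)) \<longlonglongrightarrow> measure lebesgue (\<Union>n. T' n)"
  proof (rule Lim_measure_incseq)
    show "range T' \<subseteq> sets lebesgue" using T' by (auto intro: fmeasurableD lmeasurable_compact)
    show "incseq T'" unfolding T'_def by (intro monoI) auto
    have "emeasure lebesgue (\<Union>n. T' n) \<le> emeasure lebesgue T"
      using T(1) by (intro emeasure_mono) (auto simp: T'_def borel_closed)
    then show "emeasure lebesgue (\<Union>n. T' n) \<noteq> \<infinity>" using fmeasurableD2[OF Tm] by (auto simp: top_unique)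
  qed
  ultimately have "(\<lambda>n. measure lebesgue (T' n)) \<longlonglongrightarrow> measure lebesgue T" by simp
  moreover have "measure lebesgue T - e / 2 < measure lebesgue T" using e by simp
  ultimately have "\<forall>\<^sub>F n in sequentially. measure lebesgue T - e / 2 < measure lebesgue (T' n)"
    by (rule order_tendstoD(1))
  then obtain n where "measure lebesgue T - e / 2 < measure lebesgue (T' n)"
    by (auto simp: eventually_sequentially)
  then show thesis using that[OF T'[of n]] mT T(2) by (auto simp: T'_def)
qed

lemma brunn_minkowski_differences:
  fixes A B S :: "'a::euclidean_space set"
  assumes B: "compact B" "B \<noteq> {}" and A: "A \<in> lmeasurable" "A \<noteq> {}"
    and S: "S \<in> lmeasurable" "\<And>a b. a \<in> A \<Longrightarrow> b \<in> B \<Longrightarrow> b - a \<in> S"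
  shows "measure lebesgue B powr (1 / DIM('a)) + measure lebesgue A powr (1 / DIM('a))
         \<le> measure lebesgue S powr (1 / DIM('a))"
proof -
  define d where "d = real DIM('a)"
  define Y where "Y = measure lebesgue S powr (1 / d) - measure lebesgue B powr (1 / d)"
  have d: "d > 0" by (simp add: d_def)
  obtain a where a: "a \<in> A" using A(2) by blast
  have compact_case: "0 \<le> Y \<and> measure lebesgue K \<le> Y powr d" if K: "compact K" "K \<noteq> {}" "K \<subseteq> A" for K
  proof -
    have K': "compact (uminus ` K)" "uminus ` K \<noteq> {}" using K by (auto simp: compact_negations)
    have "B + uminus ` K \<subseteq> S" using S(2) K(3) by (force simp: set_plus_def)
    then have "measure lebesgue (B + uminus ` K) \<le> measure lebesgue S"
      using B K' by (intro measure_mono_fmeasurable[OF _ _ S(1)] fmeasurableD lmeasurable_compact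
          compact_set_plus)
    then have "measure lebesgue B powr (1 / d) + measure lebesgue K powr (1 / d) \<le> measure lebesgue S powr (1 / d)"
      using brunn_minkowski_compact[OF B K'] powr_mono2[of "1 / d" "measure lebesgue (B + uminus ` K)"]
      unfolding brunn_minkowski_def d_def measure_reflection by fastforce
    then have K_le: "measure lebesgue K powr (1 / d) \<le> Y" by (simp add: Y_def)
    then have "(measure lebesgue K powr (1 / d)) powr d \<le> Y powr d"
      using d by (intro powr_mono2) auto
    then show ?thesis using K_le d by (simp add: powr_powr order_trans[OF powr_ge_zero])
  qed
  have Y: "0 \<le> Y" using compact_case[of "{a}"] a by simp
  have "measure lebesgue A \<le> Y powr d + \<epsilon>" if \<epsilon>: "\<epsilon> > 0" for \<epsilon>
  proof -
    obtain K where K: "compact K" "K \<subseteq> A" "measure lebesgue A - \<epsilon> \<le> measure lebesgue K"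
      using lmeasurable_inner_compact[OF A(1) \<epsilon>] by blast
    \<comment> \<open>Adding the point \<open>a\<close> keeps the approximating compact set nonempty.\<close>
    have "measure lebesgue K \<le> measure lebesgue (insert a K)"
      using K by (intro measure_mono_fmeasurable) (auto intro: lmeasurable_compact fmeasurableD)
    then show ?thesis using K compact_case[of "insert a K"] a by auto
  qed
  then have "measure lebesgue A \<le> Y powr d" by (rule field_le_epsilon)
  then have "measure lebesgue A powr (1 / d) \<le> Y"
    using le_powr_inverse_iff[of "measure lebesgue A powr (1 / d)" "Y powr d" d] Y d
    by (simp add: powr_powr)
  then show ?thesis by (simp add: Y_def d_def)
qed

subsection \<open>Intersections of translates\<close>

lemma compact_Inter_translates:
  fixes A C :: "'a::euclidean_space set"
  assumes "compact C" "A \<noteq> {}"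
  shows "compact (\<Inter>a\<in>A. (\<lambda>c. a + c) ` C)"
proof -
  obtain a where a: "a \<in> A" using assms(2) by blast
  have translate: "compact ((\<lambda>c. b + c) ` C)" for b using compact_translation[OF assms(1), of b] by simp
  then have "compact ((\<lambda>c. a + c) ` C \<inter> (\<Inter>a\<in>A. (\<lambda>c. a + c) ` C))"
    by (intro compact_Int_closed[OF translate] closed_INT ballI compact_imp_closed translate)
  moreover have "(\<lambda>c. a + c) ` C \<inter> (\<Inter>a\<in>A. (\<lambda>c. a + c) ` C) = (\<Inter>a\<in>A. (\<lambda>c. a + c) ` C)"
    using a by blast
  ultimately show ?thesis by simp
qed

lemma Inter_translates_differences:
  fixes A C :: "'a::ab_group_add set"
  assumes "a \<in> A" "b \<in> (\<Inter>a\<in>A. (\<lambda>c. a + c) ` C)"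
  shows "b - a \<in> C"
proof -
  obtain c where "c \<in> C" "b = a + c" using assms by blast
  then show ?thesis by simp
qed

lemma homothet_subset_Inter_translates:
  fixes C :: "'a::real_vector set"
  assumes "convex C" "0 \<le> t" "t \<le> 1"
  shows "(\<lambda>c. (1 - t) *\<^sub>R c + x) ` C \<subseteq> (\<Inter>a\<in>(\<lambda>c. x + t *\<^sub>R (- c)) ` C. (\<lambda>c. a + c) ` C)"
proof (intro subsetI INT_I)
  fix y a assume "y \<in> (\<lambda>c. (1 - t) *\<^sub>R c + x) ` C" "a \<in> (\<lambda>c. x + t *\<^sub>R (- c)) ` C"
  then obtain c\<^sub>1 c\<^sub>2 where c: "c\<^sub>1 \<in> C" "y = (1 - t) *\<^sub>R c\<^sub>1 + x" "c\<^sub>2 \<in> C" "a = x + t *\<^sub>R (- c\<^sub>2)"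
    by blast
  have "t *\<^sub>R c\<^sub>2 + (1 - t) *\<^sub>R c\<^sub>1 \<in> C" using assms c unfolding convex_def by auto
  moreover have "y = a + (t *\<^sub>R c\<^sub>2 + (1 - t) *\<^sub>R c\<^sub>1)" using c by (simp add: algebra_simps)
  ultimately show "y \<in> (\<lambda>c. a + c) ` C" by blast
qed

lemma emeasure_reflected_homothet:
  fixes C :: "'a::euclidean_space set"
  assumes "C \<in> lmeasurable"
  shows "emeasure lebesgue ((\<lambda>c. x + t *\<^sub>R (- c)) ` C) = ennreal (\<bar>t\<bar> ^ DIM('a) * measure lebesgue C)"
proof -
  have "(\<lambda>c. x + t *\<^sub>R (- c)) ` C = (\<lambda>c. (- t) *\<^sub>R c + x) ` C"
    by (intro image_cong) (auto simp: algebra_simps)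
  then show ?thesis
    using emeasure_lebesgue_affine[of "- t" x C] emeasure_eq_measure2[OF assms] by (simp add: ennreal_mult)
qed

lemma emeasure_Inter_translates_reflected_homothet:
  fixes C :: "'a::euclidean_space set"
  assumes C: "compact C" "convex C" and t: "0 \<le> t" "t \<le> 1"
  shows "ennreal ((1 - t) ^ DIM('a) * measure lebesgue C)
         \<le> emeasure lebesgue (\<Inter>a\<in>(\<lambda>c. x + t *\<^sub>R (- c)) ` C. (\<lambda>c. a + c) ` C)"
proof -
  have "ennreal ((1 - t) ^ DIM('a) * measure lebesgue C) = emeasure lebesgue ((\<lambda>c. (1 - t) *\<^sub>R c + x) ` C)"
    using emeasure_lebesgue_affine[of "1 - t" x C] emeasure_eq_measure2[OF lmeasurable_compact[OF C(1)]] t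
    by (simp add: ennreal_mult)
  also have "\<dots> \<le> emeasure lebesgue (\<Inter>a\<in>(\<lambda>c. x + t *\<^sub>R (- c)) ` C. (\<lambda>c. a + c) ` C)"
  proof (rule emeasure_mono[OF homothet_subset_Inter_translates[OF C(2) t]])
    have "closed (\<Inter>a\<in>(\<lambda>c. x + t *\<^sub>R (- c)) ` C. (\<lambda>c. a + c) ` C)"
      using compact_translation[OF C(1)] by (intro closed_INT ballI compact_imp_closed) simp
    then show "(\<Inter>a\<in>(\<lambda>c. x + t *\<^sub>R (- c)) ` C. (\<lambda>c. a + c) ` C) \<in> sets lebesgue"
      by (simp add: borel_closed)
  qed
  finally show ?thesis .
qed

lemma powr_root_bound_complement:
  fixes m c t :: real and n :: nat
  assumes n: "n > 0" and nonneg: "0 \<le> m" "0 \<le> c" "0 \<le> t"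
    and bm: "m powr (1 / n) + (t ^ n * c) powr (1 / n) \<le> c powr (1 / n)"
  shows "m \<le> max 0 (1 - t) ^ n * c"
proof -
  have "(t ^ n) powr (1 / n) = t"
  proof (cases "t = 0")
    case False
    then show ?thesis using n nonneg by (simp add: powr_realpow[symmetric] powr_powr)
  qed (use n in simp)
  then have "(t ^ n * c) powr (1 / n) = t * c powr (1 / n)" using nonneg by (simp add: powr_mult)
  then have root: "m powr (1 / n) \<le> (1 - t) * c powr (1 / n)" using bm by (simp add: algebra_simps)
  show ?thesis
  proof (cases "t < 1")
    case True
    have "m = (m powr (1 / n)) powr n" using n nonneg by (simp add: powr_powr)
    also have "\<dots> \<le> ((1 - t) * c powr (1 / n)) powr n" using root n by (intro powr_mono2) auto
    also have "\<dots> = (1 - t) ^ n * c"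
      using True n nonneg by (simp add: powr_mult powr_powr powr_realpow)
    finally show ?thesis using True by simp
  next
    case False
    then have "(1 - t) * c powr (1 / n) \<le> 0" by (simp add: mult_nonpos_nonneg)
    then have "m powr (1 / n) = 0" using root powr_ge_zero[of m "1 / n"] by linarith
    then show ?thesis using False n by (simp add: zero_power)
  qed
qed

theorem lemma6p4:
  fixes C A A' :: "'a::euclidean_space set" and x :: 'a and t :: real
  assumes "compact C" and "convex C"
    and "A \<in> sets lebesgue" and "A \<noteq> {}"
    and "t > 0" and "A' = (\<lambda>c. x + t *\<^sub>R (- c)) ` C"
    and "emeasure lebesgue A = emeasure lebesgue A'"
  shows "emeasure lebesgue (\<Inter>a\<in>A. (\<lambda>c. a + c) ` C)
         \<le> emeasure lebesgue (\<Inter>a\<in>A'. (\<lambda>c. a + c) ` C)"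
proof (cases "(\<Inter>a\<in>A. (\<lambda>c. a + c) ` C) = {}")
  case False
  let ?B = "\<Inter>a\<in>A. (\<lambda>c. a + c) ` C" and ?vol = "measure lebesgue"
  have C: "C \<in> lmeasurable" using assms(1) by (rule lmeasurable_compact)
  have B: "emeasure lebesgue ?B = ennreal (?vol ?B)"
    using lmeasurable_compact[OF compact_Inter_translates[OF assms(1,4)]] by (simp add: emeasure_eq_measure2)
  have "emeasure lebesgue A = ennreal (t ^ DIM('a) * ?vol C)"
    using assms(5-7) emeasure_reflected_homothet[OF C, of x t] by simp
  then have A: "A \<in> lmeasurable" "?vol A = t ^ DIM('a) * ?vol C"
    using assms(3,5) by (simp_all add: fmeasurable_def measure_def)
  \<comment> \<open>Brunn--Minkowski for the differences \<open>B - A \<subseteq> C\<close> bounds the volume of \<open>B\<close>.\<close>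
  have "?vol ?B powr (1 / DIM('a)) + ?vol A powr (1 / DIM('a)) \<le> ?vol C powr (1 / DIM('a))"
    using compact_Inter_translates[OF assms(1,4)] False A(1) assms(4) C Inter_translates_differences
    by (rule brunn_minkowski_differences)
  then have vol_B: "?vol ?B \<le> max 0 (1 - t) ^ DIM('a) * ?vol C"
    using assms(5) by (intro powr_root_bound_complement) (simp_all add: A(2))
  show ?thesis
  proof (cases "t < 1")
    case True
    then have "emeasure lebesgue ?B \<le> ennreal ((1 - t) ^ DIM('a) * ?vol C)"
      using vol_B B by (simp add: ennreal_leI)
    also have "\<dots> \<le> emeasure lebesgue (\<Inter>a\<in>A'. (\<lambda>c. a + c) ` C)"
      using emeasure_Inter_translates_reflected_homothet[OF assms(1,2), of t x] True assms(5,6) by simp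
    finally show ?thesis .
  next
    case False
    then have "max 0 (1 - t) ^ DIM('a) * ?vol C = 0" by (simp add: zero_power)
    then have "?vol ?B \<le> 0" using vol_B by (simp only:)
    then have "?vol ?B = 0" using measure_nonneg[of lebesgue ?B] by (rule order_antisym)
    then show ?thesis using B by simp
  qed
qed simp

end
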